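(* Let $\mathbb{F}$ be a finite field, $M\in\mathbb{F}^{m\times n}$ with $\operatorname{rank}(M)=r-1$. Let $C\in\mathbb{F}^{m\times r}$, $F\in\mathbb{F}^{r\times n}$ with $M=CF$, and let $C_0\in\mathbb{F}^{m\times(r-1)}$, $F_0\in\mathbb{F}^{(r-1)\times n}$ with $M=C_0F_0$. Then there exists $G\in\mathbb{F}^{(r-1)\times r}$ with $C=C_0G$, or there exists $H\in\mathbb{F}^{r\times(r-1)}$ with $F=HF_0$. *)

theory Defs
  imports "Jordan_Normal_Form.DL_Rank"
begin

end

theory Submission
  imports Defs
begin

text \<open>Both factorisations put the column space of M inside those of C0 and C. As C0 has only
  r - 1 columns and rank M = r - 1, the column spaces of C0 and M coincide. If rank C < r, the
  same argument gives col C = col M = col C0, so C factors through C0. Otherwise C has full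
  column rank, hence is left-cancellable: col C0 = col M \<subseteq> col C yields C0 = C H, and
  C F = M = C0 F0 = C H F0 gives F = H F0.\<close>

lemma (in vectorspace) subspace_eq_if_dim_le:
  assumes U: "subspace K U V" and W: "subspace K W V" and "U \<subseteq> W"
    and fin_U: "vectorspace.fin_dim K (vs U)" and fin_W: "vectorspace.fin_dim K (vs W)"
    and dim_le: "vectorspace.dim K (vs W) \<le> vectorspace.dim K (vs U)"
  shows "U = W"
proof -
  have vs_U: "vectorspace K (vs U)" and vs_W: "vectorspace K (vs W)"
    using U W subspace_is_vs by blast+
  have mod_U: "submodule K U V" and mod_W: "submodule K W V"
    using U W unfolding subspace_def by blast+
  obtain b where "finite b" and b: "vectorspace.basis K (vs U) b"
    using vectorspace.finite_basis_exists[OF vs_U fin_U] by blast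
  have "b \<subseteq> U" and "LinearCombinations.module.lin_indpt K (vs U) b"
    using b unfolding vectorspace.basis_def[OF vs_U] by auto
  then have "lin_indpt b"
    using span_li_not_depend(2)[OF _ mod_U] by blast
  with \<open>b \<subseteq> U\<close> \<open>U \<subseteq> W\<close> have "b \<subseteq> W" "LinearCombinations.module.lin_indpt K (vs W) b"
    using span_li_not_depend(2)[OF _ mod_W] by blast+
  moreover have "card b = vectorspace.dim K (vs U)"
    using vectorspace.dim_basis[OF vs_U \<open>finite b\<close> b] by simp
  ultimately have "vectorspace.basis K (vs W) b"
    using vectorspace.dim_li_is_basis[OF vs_W fin_W \<open>finite b\<close>] dim_le by auto
  then have "span b = W"
    using span_li_not_depend(1)[OF \<open>b \<subseteq> W\<close> mod_W]
    unfolding vectorspace.basis_def[OF vs_W] by auto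
  with span_is_subset[OF \<open>b \<subseteq> U\<close> mod_U] \<open>U \<subseteq> W\<close> show ?thesis by blast
qed

context vec_space
begin

lemma col_space_eq_if_rank_le:
  assumes A: "A \<in> carrier_mat n k" and B: "B \<in> carrier_mat n l"
    and sub: "col_space A \<subseteq> col_space B" and "rank B \<le> rank A"
  shows "col_space A = col_space B"
proof -
  have "set (cols A) \<subseteq> carrier_vec n" "set (cols B) \<subseteq> carrier_vec n"
    using A B cols_dim by blast+
  then show ?thesis
    using subspace_eq_if_dim_le[OF span_is_subspace span_is_subspace sub[unfolded col_space_def]]
      fin_dim_span \<open>rank B \<le> rank A\<close>
    unfolding col_space_def rank_def by auto
qed

lemma col_space_mult_subset:
  assumes A: "A \<in> carrier_mat n l" and B: "B \<in> carrier_mat l k"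
  shows "col_space (A * B) \<subseteq> col_space A"
proof
  fix y assume "y \<in> col_space (A * B)"
  then obtain x where "x \<in> carrier_vec k" and y: "y = (A * B) *\<^sub>v x"
    using col_space_eq[OF mult_carrier_mat[OF A B]] A B by auto
  then have "y = A *\<^sub>v (B *\<^sub>v x)" and "B *\<^sub>v x \<in> carrier_vec l"
    using A B by auto
  then show "y \<in> col_space A" using col_space_eq[OF A] A by auto
qed

lemma factor_mat_if_col_space_subset:
  assumes A: "A \<in> carrier_mat n l" and B: "B \<in> carrier_mat n k"
    and sub: "col_space B \<subseteq> col_space A"
  shows "\<exists>G \<in> carrier_mat l k. B = A * G"
proof -
  have "\<exists>x \<in> carrier_vec l. A *\<^sub>v x = col B j" if "j < k" for j
  proof -
    have "col B j \<in> set (cols B)" using B \<open>j < k\<close> by (simp add: cols_def)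
    then have "col B j \<in> col_space B"
      using in_own_span[of "set (cols B)"] cols_dim B unfolding col_space_def by blast
    then show ?thesis using sub col_space_eq[OF A] A by auto
  qed
  then obtain g where g: "\<And>j. j < k \<Longrightarrow> g j \<in> carrier_vec l \<and> A *\<^sub>v g j = col B j"
    by metis
  define G where "G = mat l k (\<lambda>(i, j). g j $ i)"
  have G: "G \<in> carrier_mat l k" by (simp add: G_def)
  have "col (A * G) j = col B j" if "j < k" for j
  proof -
    have "col G j = g j"
      using g[OF that] that unfolding G_def by (auto intro!: eq_vecI)
    then show ?thesis using col_mult2[OF A G that] g[OF that] by simp
  qed
  then have "B = A * G"
    using A B G by (intro mat_col_eqI) auto
  with G show ?thesis by blast
qed

lemma rank_less_if_not_distinct_cols:
  assumes A: "A \<in> carrier_mat n nc" and "\<not> distinct (cols A)"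
  shows "rank A < nc"
proof -
  obtain S where S: "maximal S (\<lambda>T. T \<subseteq> set (cols A) \<and> lin_indpt T)"
    using maximal_exists[of "\<lambda>T. T \<subseteq> set (cols A) \<and> lin_indpt T" "card (set (cols A))" "{}"]
    by (meson List.finite_set card_mono empty_iff empty_subsetI finite_lin_indpt2 rev_finite_subset)
  then have "card S \<le> card (set (cols A))" by (simp add: card_mono maximal_def)
  also have "\<dots> < length (cols A)"
    using \<open>\<not> distinct (cols A)\<close> card_distinct card_length nat_less_le by metis
  finally show ?thesis using rank_card_indpt[OF A S] A by simp
qed

lemma full_col_rank_mult_vec_eq_0:
  assumes C: "C \<in> carrier_mat n nc" and "rank C = nc" and v: "v \<in> carrier_vec nc"
    and Cv: "C *\<^sub>v v = 0\<^sub>v n"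
  shows "v = 0\<^sub>v nc"
proof (rule ccontr)
  assume "v \<noteq> 0\<^sub>v nc"
  have "distinct (cols C)"
    using rank_less_if_not_distinct_cols[OF C] \<open>rank C = nc\<close> by fastforce
  then have "lin_indpt (set (cols C))" and "lin_dep (set (cols C))"
    using full_rank_lin_indpt[OF C \<open>rank C = nc\<close>] lin_depI[OF C v \<open>v \<noteq> 0\<^sub>v nc\<close> Cv]
    by auto
  then show False by simp
qed

lemma full_col_rank_mult_left_cancel:
  assumes C: "C \<in> carrier_mat n nc" and "rank C = nc"
    and F: "F \<in> carrier_mat nc k" and F': "F' \<in> carrier_mat nc k"
    and eq: "C * F = C * F'"
  shows "F = F'"
proof (rule mat_col_eqI)
  fix j assume "j < dim_col F'"
  then have j: "j < k" using F' by simp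
  have cols: "col F j \<in> carrier_vec nc" "col F' j \<in> carrier_vec nc" using F F' j by auto
  have "C *\<^sub>v col F j = C *\<^sub>v col F' j"
    using col_mult2[OF C F j] col_mult2[OF C F' j] eq by simp
  then have "C *\<^sub>v (col F j - col F' j) = 0\<^sub>v n"
    using mult_minus_distrib_mat_vec[OF C cols] mult_mat_vec_carrier[OF C cols(2)] by simp
  then have "col F j - col F' j = 0\<^sub>v nc"
    using full_col_rank_mult_vec_eq_0[OF C \<open>rank C = nc\<close>] cols by simp
  then show "col F j = col F' j"
    using cols by (metis comm_add_vec minus_add_minus_vec minus_cancel_vec uminus_eq_vec zero_minus_vec)
qed (use F F' in auto)

end

theorem lemma9:
  fixes M C F C0 F0 :: "'a :: {field, finite} mat"
    and m n r :: nat
  assumes "r \<ge> 1"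
    and "M \<in> carrier_mat m n"
    and "vec_space.rank m M = r - 1"
    and "C \<in> carrier_mat m r" and "F \<in> carrier_mat r n" and "M = C * F"
    and "C0 \<in> carrier_mat m (r - 1)" and "F0 \<in> carrier_mat (r - 1) n" and "M = C0 * F0"
  shows "(\<exists>G \<in> carrier_mat (r - 1) r. C = C0 * G) \<or> (\<exists>H \<in> carrier_mat r (r - 1). F = H * F0)"
proof -
  interpret vec_space "TYPE('a)" m .
  note M = assms(2) and C = assms(4) and F = assms(5) and C0 = assms(7) and F0 = assms(8)
  have M_C: "col_space M \<subseteq> col_space C"
    using col_space_mult_subset[OF C F] \<open>M = C * F\<close> by simp
  have M_C0: "col_space M \<subseteq> col_space C0"
    using col_space_mult_subset[OF C0 F0] \<open>M = C0 * F0\<close> by simp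
  have C0_M: "col_space C0 = col_space M"
    using col_space_eq_if_rank_le[OF M C0 M_C0] rank_le_nc[OF C0] assms(3) by simp
  show ?thesis
  proof (cases "rank C = r")
    case False
    then have "rank C \<le> rank M" using rank_le_nc[OF C] assms(3) by simp
    then have "col_space C \<subseteq> col_space C0"
      using col_space_eq_if_rank_le[OF M C M_C] M_C0 by simp
    then show ?thesis using factor_mat_if_col_space_subset[OF C0 C] by blast
  next
    case True
    obtain H where H: "H \<in> carrier_mat r (r - 1)" and "C0 = C * H"
      using factor_mat_if_col_space_subset[OF C C0] C0_M M_C by auto
    then have "C * F = C * (H * F0)"
      using assoc_mult_mat[OF C H F0] \<open>M = C * F\<close> \<open>M = C0 * F0\<close> by simp
    then have "F = H * F0"
      using full_col_rank_mult_left_cancel[OF C True F] H F0 by simp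
    with H show ?thesis by blast
  qed
qed

end
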